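(* Let $D$ be a division semialgebra over $\mathbb{Z}_\mathrm{max}$ with finite unit index. Then $D\cong F^{(n)}$ for some positive integer $n$.
   Context: A (possibly noncommutative) semiring has a commutative associative addition with identity $0$ and an associative multiplication with identity $1$, satisfying both distributive laws; a division semiring is one in which every nonzero element is invertible. $\mathbb{Z}_\mathrm{max}=\mathbb{Z}\cup\{-\infty\}$ is the semifield with addition $\max$ and multiplication ordinary addition; writing $u$ for the integer $1$ in it, $\mathbb{Z}_\mathrm{max}=\{0\}\cup\{u^k:k\in\mathbb{Z}\}$. A division semialgebra over a semifield $K$ is a division semiring $D$ with an injective homomorphism from $K$ into the center of $D$. The unit index is $\mathrm{ui}(D/K)=|D^\times/K^\times|$. For a positive integer $n$, $F^{(n)}$ is the semifield $\mathbb{Z}_\mathrm{max}$ regarded as a semialgebra over $\mathbb{Z}_\mathrm{max}$ via $u^k\mapsto u^{nk}$, $0\mapsto 0$; the isomorphism is one of semialgebras over $\mathbb{Z}_\mathrm{max}$. *)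

theory Defs
  imports Main
begin

text \<open>The semifield Z_max = Z \<union> {-\<infinity>}, encoded as int option (None = -\<infinity> = 0,
  Some k = u^k). Addition is max, multiplication is integer addition.\<close>

type_synonym zmax = "int option"

definition zmax_add :: "zmax \<Rightarrow> zmax \<Rightarrow> zmax" where
  "zmax_add a b = (case a of None \<Rightarrow> b
     | Some x \<Rightarrow> (case b of None \<Rightarrow> Some x | Some y \<Rightarrow> Some (max x y)))"

definition zmax_mul :: "zmax \<Rightarrow> zmax \<Rightarrow> zmax" where
  "zmax_mul a b = (case a of None \<Rightarrow> None
     | Some x \<Rightarrow> (case b of None \<Rightarrow> None | Some y \<Rightarrow> Some (x + y)))"

definition zmax_zero :: zmax where "zmax_zero = None"
definition zmax_one :: zmax where "zmax_one = Some 0"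

definition semiring_on ::
  "'a set \<Rightarrow> ('a \<Rightarrow> 'a \<Rightarrow> 'a) \<Rightarrow> ('a \<Rightarrow> 'a \<Rightarrow> 'a) \<Rightarrow> 'a \<Rightarrow> 'a \<Rightarrow> bool" where
  "semiring_on S add mul z e \<longleftrightarrow>
     z \<in> S \<and> e \<in> S \<and>
     (\<forall>x\<in>S. \<forall>y\<in>S. add x y \<in> S \<and> mul x y \<in> S) \<and>
     (\<forall>x\<in>S. \<forall>y\<in>S. \<forall>w\<in>S. add (add x y) w = add x (add y w)) \<and>
     (\<forall>x\<in>S. \<forall>y\<in>S. add x y = add y x) \<and>
     (\<forall>x\<in>S. add z x = x) \<and>
     (\<forall>x\<in>S. \<forall>y\<in>S. \<forall>w\<in>S. mul (mul x y) w = mul x (mul y w)) \<and>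
     (\<forall>x\<in>S. mul e x = x \<and> mul x e = x) \<and>
     (\<forall>x\<in>S. \<forall>y\<in>S. \<forall>w\<in>S. mul x (add y w) = add (mul x y) (mul x w)) \<and>
     (\<forall>x\<in>S. \<forall>y\<in>S. \<forall>w\<in>S. mul (add x y) w = add (mul x w) (mul y w))"

definition units_on :: "'a set \<Rightarrow> ('a \<Rightarrow> 'a \<Rightarrow> 'a) \<Rightarrow> 'a \<Rightarrow> 'a set" where
  "units_on S mul e = {x \<in> S. \<exists>y\<in>S. mul x y = e \<and> mul y x = e}"

definition division_semiring_on ::
  "'a set \<Rightarrow> ('a \<Rightarrow> 'a \<Rightarrow> 'a) \<Rightarrow> ('a \<Rightarrow> 'a \<Rightarrow> 'a) \<Rightarrow> 'a \<Rightarrow> 'a \<Rightarrow> bool" where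
  "division_semiring_on S add mul z e \<longleftrightarrow>
     semiring_on S add mul z e \<and> (\<forall>x\<in>S. x \<noteq> z \<longrightarrow> x \<in> units_on S mul e)"

definition center_on :: "'a set \<Rightarrow> ('a \<Rightarrow> 'a \<Rightarrow> 'a) \<Rightarrow> 'a set" where
  "center_on S mul = {c \<in> S. \<forall>x\<in>S. mul c x = mul x c}"

definition zmax_hom_on ::
  "'a set \<Rightarrow> ('a \<Rightarrow> 'a \<Rightarrow> 'a) \<Rightarrow> ('a \<Rightarrow> 'a \<Rightarrow> 'a) \<Rightarrow> 'a \<Rightarrow> 'a \<Rightarrow> (zmax \<Rightarrow> 'a) \<Rightarrow> bool" where
  "zmax_hom_on S add mul z e f \<longleftrightarrow>
     (\<forall>a. f a \<in> S) \<and> f zmax_zero = z \<and> f zmax_one = e \<and>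
     (\<forall>a b. f (zmax_add a b) = add (f a) (f b)) \<and>
     (\<forall>a b. f (zmax_mul a b) = mul (f a) (f b))"

definition division_semialgebra_zmax ::
  "'a set \<Rightarrow> ('a \<Rightarrow> 'a \<Rightarrow> 'a) \<Rightarrow> ('a \<Rightarrow> 'a \<Rightarrow> 'a) \<Rightarrow> 'a \<Rightarrow> 'a \<Rightarrow> (zmax \<Rightarrow> 'a) \<Rightarrow> bool" where
  "division_semialgebra_zmax S add mul z e f \<longleftrightarrow>
     division_semiring_on S add mul z e \<and> zmax_hom_on S add mul z e f \<and> inj f \<and>
     (\<forall>a. f a \<in> center_on S mul)"

text \<open>The cosets of the (central, hence normal) subgroup f(K^x) in D^x; K^x = {u^k}.
  The unit index ui(D/K) is the number of these cosets.\<close>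
definition unit_cosets ::
  "'a set \<Rightarrow> ('a \<Rightarrow> 'a \<Rightarrow> 'a) \<Rightarrow> 'a \<Rightarrow> (zmax \<Rightarrow> 'a) \<Rightarrow> 'a set set" where
  "unit_cosets S mul e f = (\<lambda>x. {mul x (f (Some k)) | k. True}) ` units_on S mul e"

text \<open>Structure map of F^(n): u^k \<mapsto> u^(nk), 0 \<mapsto> 0.\<close>
definition Fn_map :: "nat \<Rightarrow> zmax \<Rightarrow> zmax" where
  "Fn_map n a = map_option (\<lambda>k. int n * k) a"

definition iso_to_Fn ::
  "'a set \<Rightarrow> ('a \<Rightarrow> 'a \<Rightarrow> 'a) \<Rightarrow> ('a \<Rightarrow> 'a \<Rightarrow> 'a) \<Rightarrow> 'a \<Rightarrow> 'a \<Rightarrow> (zmax \<Rightarrow> 'a) \<Rightarrow> nat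
     \<Rightarrow> ('a \<Rightarrow> zmax) \<Rightarrow> bool" where
  "iso_to_Fn S add mul z e f n \<psi> \<longleftrightarrow>
     bij_betw \<psi> S UNIV \<and> \<psi> z = zmax_zero \<and> \<psi> e = zmax_one \<and>
     (\<forall>x\<in>S. \<forall>y\<in>S. \<psi> (add x y) = zmax_add (\<psi> x) (\<psi> y)) \<and>
     (\<forall>x\<in>S. \<forall>y\<in>S. \<psi> (mul x y) = zmax_mul (\<psi> x) (\<psi> y)) \<and>
     (\<forall>a. \<psi> (f a) = Fn_map n a)"

end

theory Submission
  imports Defs
begin

text \<open>Since 1 + 1 = 1 in Z_max, D is additively idempotent, and x \<preceq> y iff x + y = y is a
  partial order compatible with multiplication. The key algebraic fact is that for a unit y,
  y^k \<preceq> 1 with k > 0 forces y \<preceq> 1. Finite unit index puts a positive power of every unit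
  into the totally ordered image of the u^k, so every unit is comparable with 1: the order is total,
  and archimedean. The units in (1, f u] lie in pairwise distinct cosets, hence are finitely many;
  the least of them, g, generates the unit group, so D = {0} \<union> g^Z \<cong> Z_max, and f u = g^n
  for some n > 0.\<close>

locale semiring_carrier =
  fixes S :: "'a set"
    and add :: "'a \<Rightarrow> 'a \<Rightarrow> 'a" (infixl \<open>\<oplus>\<close> 65)
    and mul :: "'a \<Rightarrow> 'a \<Rightarrow> 'a" (infixl \<open>\<otimes>\<close> 70)
    and z e :: 'a
  assumes semiring: "semiring_on S (\<oplus>) (\<otimes>) z e"
begin

lemma zero_closed: "z \<in> S" and one_closed: "e \<in> S"
  using semiring unfolding semiring_on_def by blast+

lemma add_closed: "x \<in> S \<Longrightarrow> y \<in> S \<Longrightarrow> x \<oplus> y \<in> S"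
  and mul_closed: "x \<in> S \<Longrightarrow> y \<in> S \<Longrightarrow> x \<otimes> y \<in> S"
  and add_assoc: "x \<in> S \<Longrightarrow> y \<in> S \<Longrightarrow> w \<in> S \<Longrightarrow> x \<oplus> y \<oplus> w = x \<oplus> (y \<oplus> w)"
  and add_commute: "x \<in> S \<Longrightarrow> y \<in> S \<Longrightarrow> x \<oplus> y = y \<oplus> x"
  and add_zero_left: "x \<in> S \<Longrightarrow> z \<oplus> x = x"
  and mul_assoc: "x \<in> S \<Longrightarrow> y \<in> S \<Longrightarrow> w \<in> S \<Longrightarrow> x \<otimes> y \<otimes> w = x \<otimes> (y \<otimes> w)"
  and mul_one_left: "x \<in> S \<Longrightarrow> e \<otimes> x = x"
  and mul_one_right: "x \<in> S \<Longrightarrow> x \<otimes> e = x"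
  and distrib_left: "x \<in> S \<Longrightarrow> y \<in> S \<Longrightarrow> w \<in> S \<Longrightarrow> x \<otimes> (y \<oplus> w) = x \<otimes> y \<oplus> x \<otimes> w"
  and distrib_right: "x \<in> S \<Longrightarrow> y \<in> S \<Longrightarrow> w \<in> S \<Longrightarrow> (x \<oplus> y) \<otimes> w = x \<otimes> w \<oplus> y \<otimes> w"
  using semiring unfolding semiring_on_def by blast+

lemma add_zero_right: "x \<in> S \<Longrightarrow> x \<oplus> z = x"
  using add_zero_left add_commute zero_closed by metis

abbreviation Units :: "'a set" where "Units \<equiv> units_on S (\<otimes>) e"

definition inv :: "'a \<Rightarrow> 'a" where
  "inv x = (SOME y. y \<in> S \<and> x \<otimes> y = e \<and> y \<otimes> x = e)"

lemma unit_closed: "x \<in> Units \<Longrightarrow> x \<in> S"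
  unfolding units_on_def by blast

lemma
  assumes "x \<in> Units"
  shows inv_closed: "inv x \<in> S" and r_inv: "x \<otimes> inv x = e" and l_inv: "inv x \<otimes> x = e"
proof -
  obtain y where "y \<in> S \<and> x \<otimes> y = e \<and> y \<otimes> x = e"
    using assms unfolding units_on_def by blast
  then have "inv x \<in> S \<and> x \<otimes> inv x = e \<and> inv x \<otimes> x = e"
    unfolding inv_def by (rule someI)
  then show "inv x \<in> S" "x \<otimes> inv x = e" "inv x \<otimes> x = e" by blast+
qed

lemma one_unit: "e \<in> Units"
  unfolding units_on_def using one_closed mul_one_left by blast

lemma inv_unit: assumes "x \<in> Units" shows "inv x \<in> Units"
  unfolding units_on_def
  using inv_closed[OF assms] r_inv[OF assms] l_inv[OF assms] unit_closed[OF assms] by blast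

lemma mul_inv_cancel_left: "x \<in> Units \<Longrightarrow> w \<in> S \<Longrightarrow> inv x \<otimes> (x \<otimes> w) = w"
  and mul_inv_cancel_left': "x \<in> Units \<Longrightarrow> w \<in> S \<Longrightarrow> x \<otimes> (inv x \<otimes> w) = w"
  and mul_inv_cancel_right: "x \<in> Units \<Longrightarrow> w \<in> S \<Longrightarrow> w \<otimes> x \<otimes> inv x = w"
  and mul_inv_cancel_right': "x \<in> Units \<Longrightarrow> w \<in> S \<Longrightarrow> w \<otimes> inv x \<otimes> x = w"
  by (simp_all add: mul_assoc[symmetric] mul_assoc inv_closed r_inv l_inv unit_closed
      mul_one_left mul_one_right)

lemma mul_unit: assumes x: "x \<in> Units" and y: "y \<in> Units" shows "x \<otimes> y \<in> Units"
proof -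
  have S: "x \<in> S" "y \<in> S" "inv x \<in> S" "inv y \<in> S" using x y inv_closed unit_closed by blast+
  have "x \<otimes> y \<otimes> (inv y \<otimes> inv x) = e"
    using S x y by (simp add: mul_assoc mul_closed mul_inv_cancel_left' r_inv)
  moreover have "inv y \<otimes> inv x \<otimes> (x \<otimes> y) = e"
    using S x y by (simp add: mul_assoc[symmetric] mul_closed mul_inv_cancel_right' l_inv)
  ultimately show ?thesis
    unfolding units_on_def using S by (blast intro: mul_closed)
qed

lemma cancel_left: "x \<in> Units \<Longrightarrow> a \<in> S \<Longrightarrow> b \<in> S \<Longrightarrow> x \<otimes> a = x \<otimes> b \<Longrightarrow> a = b"
  by (metis mul_inv_cancel_left)

lemma cancel_right: "x \<in> Units \<Longrightarrow> a \<in> S \<Longrightarrow> b \<in> S \<Longrightarrow> a \<otimes> x = b \<otimes> x \<Longrightarrow> a = b"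
  by (metis mul_inv_cancel_right)

lemma inv_unique: "x \<in> Units \<Longrightarrow> y \<in> S \<Longrightarrow> x \<otimes> y = e \<Longrightarrow> y = inv x"
  by (metis inv_closed mul_inv_cancel_left mul_one_right)

lemma inv_unique': "x \<in> Units \<Longrightarrow> y \<in> S \<Longrightarrow> y \<otimes> x = e \<Longrightarrow> y = inv x"
  by (metis inv_closed mul_inv_cancel_right mul_one_left)

lemma inv_inv: "x \<in> Units \<Longrightarrow> inv (inv x) = x"
  by (metis inv_unique' inv_unit r_inv unit_closed)

lemma inv_one: "inv e = e"
  using inv_unique[OF one_unit one_closed] mul_one_left one_closed by simp

lemma inv_mul: assumes "x \<in> Units" "y \<in> Units" shows "inv (x \<otimes> y) = inv y \<otimes> inv x"
proof (rule inv_unique[symmetric])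
  have S: "x \<in> S" "y \<in> S" "inv x \<in> S" "inv y \<in> S" using assms inv_closed unit_closed by blast+
  show "x \<otimes> y \<otimes> (inv y \<otimes> inv x) = e"
    using S assms by (simp add: mul_assoc mul_closed mul_inv_cancel_left' r_inv)
qed (use assms mul_unit inv_closed mul_closed in auto)

lemma commute_inv:
  assumes r: "r \<in> Units" and p: "p \<in> S" and pr: "p \<otimes> r = r \<otimes> p"
  shows "p \<otimes> inv r = inv r \<otimes> p"
proof -
  have S: "r \<in> S" "inv r \<in> S" using r unit_closed inv_closed by blast+
  have "inv r \<otimes> p = inv r \<otimes> (p \<otimes> r) \<otimes> inv r"
    using p S r by (simp add: mul_assoc mul_closed r_inv mul_one_right)
  also have "\<dots> = (inv r \<otimes> r) \<otimes> (p \<otimes> inv r)"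
    using p S by (simp add: pr mul_assoc mul_closed)
  finally show ?thesis using l_inv[OF r] p S by (simp add: mul_one_left mul_closed)
qed

definition npow :: "'a \<Rightarrow> nat \<Rightarrow> 'a" where "npow x n = ((\<otimes>) x ^^ n) e"

lemma npow_0 [simp]: "npow x 0 = e"
  unfolding npow_def by simp

lemma npow_Suc: "npow x (Suc n) = x \<otimes> npow x n"
  unfolding npow_def by simp

lemma npow_closed: "x \<in> S \<Longrightarrow> npow x n \<in> S"
  by (induction n) (simp_all add: npow_Suc one_closed mul_closed)

lemma npow_unit: "x \<in> Units \<Longrightarrow> npow x n \<in> Units"
  by (induction n) (simp_all add: npow_Suc one_unit mul_unit)

lemma npow_add: "x \<in> S \<Longrightarrow> npow x (m + n) = npow x m \<otimes> npow x n"
  by (induction m) (simp_all add: npow_Suc npow_closed mul_one_left mul_assoc)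

lemma npow_1: "x \<in> S \<Longrightarrow> npow x 1 = x"
  using npow_Suc[of x 0] mul_one_right by simp

lemma npow_Suc': "x \<in> S \<Longrightarrow> npow x (Suc n) = npow x n \<otimes> x"
  using npow_add[of x n 1] npow_1 by simp

lemma npow_mult: "x \<in> S \<Longrightarrow> npow x (m * n) = npow (npow x m) n"
  by (induction n) (simp_all add: npow_Suc npow_add)

lemma npow_inv: assumes x: "x \<in> Units" shows "npow (inv x) n = inv (npow x n)"
proof (rule inv_unique'[OF npow_unit[OF x] npow_closed])
  have S: "x \<in> S" "inv x \<in> S" using x inv_closed unit_closed by blast+
  show "npow (inv x) n \<otimes> npow x n = e"
  proof (induction n)
    case (Suc n)
    have "npow (inv x) (Suc n) \<otimes> npow x (Suc n) = (npow (inv x) n \<otimes> inv x) \<otimes> (x \<otimes> npow x n)"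
      by (simp only: npow_Suc'[OF S(2)] npow_Suc[of x])
    also have "\<dots> = npow (inv x) n \<otimes> (inv x \<otimes> (x \<otimes> npow x n))"
      using S by (simp add: mul_assoc mul_closed npow_closed)
    also have "\<dots> = e"
      using Suc x S by (simp add: mul_inv_cancel_left npow_closed)
    finally show ?case .
  qed (simp add: mul_one_left one_closed)
qed (use x inv_closed in blast)

lemma npow_commute:
  assumes x: "x \<in> S" and y: "y \<in> S" and xy: "x \<otimes> y = y \<otimes> x"
  shows "y \<otimes> npow x n = npow x n \<otimes> y"
proof (induction n)
  case (Suc n)
  have "y \<otimes> npow x (Suc n) = (y \<otimes> x) \<otimes> npow x n"
    using x y by (simp add: npow_Suc mul_assoc npow_closed)
  also have "\<dots> = x \<otimes> (npow x n \<otimes> y)"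
    by (simp only: xy[symmetric]) (simp add: x y Suc mul_assoc npow_closed)
  also have "\<dots> = npow x (Suc n) \<otimes> y"
    using x y by (simp add: npow_Suc mul_assoc npow_closed)
  finally show ?case .
qed (simp add: x y mul_one_left mul_one_right)

lemma npow_mul_distrib:
  assumes x: "x \<in> S" and y: "y \<in> S" and xy: "x \<otimes> y = y \<otimes> x"
  shows "npow (x \<otimes> y) n = npow x n \<otimes> npow y n"
proof (induction n)
  case (Suc n)
  have "npow (x \<otimes> y) (Suc n) = x \<otimes> ((y \<otimes> npow x n) \<otimes> npow y n)"
    using Suc x y by (simp add: npow_Suc npow_closed mul_closed mul_assoc)
  also have "\<dots> = x \<otimes> ((npow x n \<otimes> y) \<otimes> npow y n)"
    by (simp add: npow_commute[OF x y xy])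
  also have "\<dots> = npow x (Suc n) \<otimes> npow y (Suc n)"
    using x y by (simp add: npow_Suc npow_closed mul_closed mul_assoc)
  finally show ?case .
qed (simp add: one_closed mul_one_left)

definition zpow :: "'a \<Rightarrow> int \<Rightarrow> 'a" where
  "zpow x a = (if 0 \<le> a then npow x (nat a) else npow (inv x) (nat (- a)))"

lemma zpow_unit: "x \<in> Units \<Longrightarrow> zpow x a \<in> Units"
  unfolding zpow_def using npow_unit inv_unit by auto

lemma zpow_closed: "x \<in> Units \<Longrightarrow> zpow x a \<in> S"
  using zpow_unit unit_closed by blast

lemma zpow_0: "zpow x 0 = e"
  unfolding zpow_def by simp

lemma zpow_of_nat: "zpow x (int n) = npow x n"
  unfolding zpow_def by simp

lemma zpow_neg_of_nat: "zpow x (- int n) = npow (inv x) n"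
  unfolding zpow_def by (cases "n = 0") simp_all

lemma zpow_1: "x \<in> Units \<Longrightarrow> zpow x 1 = x"
  using zpow_of_nat[of x 1] npow_1 unit_closed by simp

lemma zpow_succ: assumes x: "x \<in> Units" shows "zpow x (a + 1) = x \<otimes> zpow x a"
proof -
  consider "0 \<le> a" | "a = -1" | "a < -1" by linarith
  then show ?thesis
  proof cases
    case 1
    then have "nat (a + 1) = Suc (nat a)" by simp
    then show ?thesis using 1 unfolding zpow_def by (simp add: npow_Suc)
  next
    case 2
    then show ?thesis unfolding zpow_def using npow_1 inv_closed[OF x] r_inv[OF x] by simp
  next
    case 3
    then have "nat (- a) = Suc (nat (- (a + 1)))" by simp
    then show ?thesis
      using 3 x unfolding zpow_def
      by (simp add: npow_Suc mul_inv_cancel_left' npow_closed inv_closed)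
  qed
qed

lemma zpow_pred: assumes x: "x \<in> Units" shows "zpow x (a - 1) = inv x \<otimes> zpow x a"
  using zpow_succ[OF x, of "a - 1"] mul_inv_cancel_left[OF x zpow_closed[OF x]] by simp

lemma zpow_add: assumes x: "x \<in> Units" shows "zpow x (a + b) = zpow x a \<otimes> zpow x b"
proof (induction a rule: int_induct[where k = 0])
  case base
  then show ?case using zpow_0 mul_one_left zpow_closed[OF x] by simp
next
  case (step1 i)
  have "zpow x (i + 1 + b) = x \<otimes> zpow x (i + b)"
    using zpow_succ[OF x, of "i + b"] by (simp add: algebra_simps)
  then show ?case
    using step1 x by (simp add: zpow_succ mul_assoc zpow_closed unit_closed)
next
  case (step2 i)
  have "zpow x (i - 1 + b) = inv x \<otimes> zpow x (i + b)"
    using zpow_pred[OF x, of "i + b"] by (simp add: algebra_simps)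
  then show ?case
    using step2 x by (simp add: zpow_pred mul_assoc zpow_closed inv_closed)
qed

lemma zpow_unique:
  assumes x: "x \<in> Units" and closed: "\<And>a. \<phi> a \<in> S" and "\<phi> 0 = e"
    and succ: "\<And>a. \<phi> (a + 1) = x \<otimes> \<phi> a"
  shows "\<phi> a = zpow x a"
proof (induction a rule: int_induct[where k = 0])
  case base
  then show ?case using \<open>\<phi> 0 = e\<close> zpow_0 by simp
next
  case (step1 i)
  then show ?case using succ zpow_succ[OF x] by simp
next
  case (step2 i)
  have "\<phi> (i - 1) = inv x \<otimes> \<phi> i"
    using succ[of "i - 1"] mul_inv_cancel_left[OF x closed] by simp
  then show ?case using step2 zpow_pred[OF x] by simp
qed

end

text \<open>Only \<open>z \<otimes> z = z\<close> is assumed of zero; that it is absorbing follows from division.\<close>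

locale division_semiring_carrier = semiring_carrier +
  assumes nonzero_unit: "x \<in> S \<Longrightarrow> x \<noteq> z \<Longrightarrow> x \<in> Units"
    and zero_neq_one: "z \<noteq> e"
    and zero_mul_zero: "z \<otimes> z = z"
begin

lemma zero_not_unit: "z \<notin> Units"
proof
  assume "z \<in> Units"
  then obtain y where y: "y \<in> S" "z \<otimes> y = e" unfolding units_on_def by blast
  have "z = z \<otimes> (z \<otimes> y)"
    using y(2) zero_closed mul_one_right by metis
  also have "\<dots> = z \<otimes> y"
    using y(1) zero_closed mul_assoc zero_mul_zero by metis
  also have "\<dots> = e" by (rule y(2))
  finally show False using zero_neq_one by simp
qed

lemma units_eq: "Units = S - {z}"
  using nonzero_unit zero_not_unit unit_closed by blast

lemma mul_zero_left: assumes x: "x \<in> S" shows "z \<otimes> x = z"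
proof (rule ccontr)
  assume "z \<otimes> x \<noteq> z"
  then have "z \<otimes> x \<in> Units" "x \<in> Units"
    using x zero_mul_zero zero_closed by (auto simp: units_eq mul_closed)
  then have "z \<otimes> x \<otimes> inv x \<in> Units" by (simp add: mul_unit inv_unit)
  then show False
    using \<open>x \<in> Units\<close> zero_not_unit zero_closed by (simp add: mul_inv_cancel_right)
qed

lemma mul_zero_right: assumes x: "x \<in> S" shows "x \<otimes> z = z"
proof (rule ccontr)
  assume "x \<otimes> z \<noteq> z"
  then have "x \<otimes> z \<in> Units" "x \<in> Units"
    using x zero_mul_zero zero_closed by (auto simp: units_eq mul_closed)
  then have "inv x \<otimes> (x \<otimes> z) \<in> Units" by (simp add: mul_unit inv_unit)
  then show False
    using \<open>x \<in> Units\<close> zero_not_unit zero_closed by (simp add: mul_inv_cancel_left)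
qed

end

locale idempotent_division_semiring = division_semiring_carrier +
  assumes one_add_one: "e \<oplus> e = e"
begin

lemma add_idem: "x \<in> S \<Longrightarrow> x \<oplus> x = x"
  using distrib_left[OF _ one_closed one_closed] one_add_one by (simp add: mul_one_right)

definition le :: "'a \<Rightarrow> 'a \<Rightarrow> bool" (infix \<open>\<preceq>\<close> 50) where
  "x \<preceq> y \<longleftrightarrow> x \<oplus> y = y"

lemma le_refl: "x \<in> S \<Longrightarrow> x \<preceq> x"
  unfolding le_def by (rule add_idem)

lemma le_antisym: "x \<in> S \<Longrightarrow> y \<in> S \<Longrightarrow> x \<preceq> y \<Longrightarrow> y \<preceq> x \<Longrightarrow> x = y"
  unfolding le_def by (metis add_commute)

lemma le_trans: "x \<in> S \<Longrightarrow> y \<in> S \<Longrightarrow> w \<in> S \<Longrightarrow> x \<preceq> y \<Longrightarrow> y \<preceq> w \<Longrightarrow> x \<preceq> w"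
  unfolding le_def by (metis add_assoc)

lemma le_add1: "x \<in> S \<Longrightarrow> y \<in> S \<Longrightarrow> x \<preceq> x \<oplus> y"
  unfolding le_def by (metis add_assoc add_idem)

lemma le_add2: "x \<in> S \<Longrightarrow> y \<in> S \<Longrightarrow> y \<preceq> x \<oplus> y"
  using le_add1 add_commute by metis

lemma add_le: "x \<in> S \<Longrightarrow> y \<in> S \<Longrightarrow> w \<in> S \<Longrightarrow> x \<preceq> w \<Longrightarrow> y \<preceq> w \<Longrightarrow> x \<oplus> y \<preceq> w"
  unfolding le_def by (metis add_assoc)

lemma add_left_mono: "x \<in> S \<Longrightarrow> y \<in> S \<Longrightarrow> w \<in> S \<Longrightarrow> y \<preceq> w \<Longrightarrow> x \<oplus> y \<preceq> x \<oplus> w"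
  using add_le le_add1 le_add2 le_trans add_closed by metis

lemma mul_left_mono: "x \<in> S \<Longrightarrow> y \<in> S \<Longrightarrow> w \<in> S \<Longrightarrow> x \<preceq> y \<Longrightarrow> w \<otimes> x \<preceq> w \<otimes> y"
  unfolding le_def by (metis distrib_left)

lemma mul_right_mono: "x \<in> S \<Longrightarrow> y \<in> S \<Longrightarrow> w \<in> S \<Longrightarrow> x \<preceq> y \<Longrightarrow> x \<otimes> w \<preceq> y \<otimes> w"
  unfolding le_def by (metis distrib_right)

lemma zero_le: "x \<in> S \<Longrightarrow> z \<preceq> x"
  unfolding le_def by (rule add_zero_left)

lemma add_eq_zero: assumes "x \<in> S" "y \<in> S" "x \<oplus> y = z" shows "x = z"
  using le_add1[OF assms(1,2)] add_zero_right[OF assms(1)] unfolding le_def assms(3) by simp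

lemma one_add_unit: assumes "x \<in> S" shows "e \<oplus> x \<in> Units"
proof -
  have "e \<oplus> x \<noteq> z" using add_eq_zero[OF one_closed assms] zero_neq_one by auto
  then show ?thesis using assms one_closed by (simp add: units_eq add_closed)
qed

lemma npow_le_one: assumes x: "x \<in> S" "x \<preceq> e" shows "npow x n \<preceq> e"
proof (induction n)
  case (Suc n)
  have "x \<otimes> npow x n \<preceq> x \<otimes> e" using mul_left_mono[OF npow_closed one_closed] x Suc by blast
  then have "npow x (Suc n) \<preceq> x" using x by (simp add: npow_Suc mul_one_right)
  then show ?case using le_trans[OF npow_closed x(1) one_closed] x by blast
qed (simp add: le_refl one_closed)

lemma one_le_npow: assumes x: "x \<in> S" "e \<preceq> x" shows "e \<preceq> npow x n"
proof (induction n)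
  case (Suc n)
  have "x \<otimes> e \<preceq> x \<otimes> npow x n" using mul_left_mono[OF one_closed npow_closed] x Suc by blast
  then have "x \<preceq> npow x (Suc n)" using x by (simp add: npow_Suc mul_one_right)
  then show ?case using le_trans[OF one_closed x(1) npow_closed] x by blast
qed (simp add: le_refl one_closed)

lemma npow_mono: assumes x: "x \<in> S" and y: "y \<in> S" and "x \<preceq> y" shows "npow x n \<preceq> npow y n"
proof (induction n)
  case (Suc n)
  have "x \<otimes> npow x n \<preceq> y \<otimes> npow x n" using mul_right_mono[OF x y npow_closed] assms by blast
  moreover have "y \<otimes> npow x n \<preceq> y \<otimes> npow y n"
    using mul_left_mono[OF npow_closed npow_closed] x y Suc by blast
  ultimately show ?case
    unfolding npow_Suc
    using le_trans[OF mul_closed[OF x] mul_closed[OF y] mul_closed[OF y]] npow_closed x y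
    by blast
qed (simp add: le_refl one_closed)

lemma npow_le_self: assumes "x \<in> S" "x \<preceq> e" "0 < n" shows "npow x n \<preceq> x"
proof -
  obtain m where "n = Suc m" using \<open>0 < n\<close> gr0_implies_Suc by blast
  then show ?thesis
    using mul_left_mono[OF npow_closed one_closed assms(1) npow_le_one[OF assms(1,2)]] assms(1)
    by (simp add: npow_Suc mul_one_right)
qed

lemma add_npow_eq_one:
  assumes A: "A \<in> S" "A \<preceq> e" and B: "B \<in> S" "B \<preceq> e" and AB: "A \<oplus> B = e"
  shows "npow A m \<oplus> B = e"
proof (induction m)
  case 0
  then show ?case using add_commute[OF one_closed B(1)] B(2) unfolding le_def by simp
next
  case (Suc m)
  have S: "npow A m \<in> S" "npow A (Suc m) \<in> S" using A npow_closed by blast+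
  have "A \<otimes> (npow A m \<oplus> B) = A" using Suc A mul_one_right by simp
  then have Am: "npow A (Suc m) \<oplus> A \<otimes> B = A" using distrib_left A B S by (simp add: npow_Suc)
  have "A \<otimes> B \<preceq> B" using mul_right_mono[OF A(1) one_closed B(1) A(2)] B mul_one_left by simp
  then have "A \<preceq> npow A (Suc m) \<oplus> B"
    using add_left_mono[OF S(2) mul_closed[OF A(1) B(1)] B(1)] Am by simp
  then have "e \<preceq> npow A (Suc m) \<oplus> B"
    using add_le[OF A(1) B(1) add_closed[OF S(2) B(1)]] le_add2[OF S(2) B(1)] AB by simp
  moreover have "npow A (Suc m) \<oplus> B \<preceq> e"
    using add_le[OF S(2) B(1) one_closed npow_le_one[OF A] B(2)] .
  ultimately show ?case using le_antisym add_closed[OF S(2) B(1)] one_closed by blast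
qed

text \<open>With \<open>p = e \<oplus> y\<close> and \<open>r = e \<oplus> inv y\<close> one has \<open>y \<otimes> r = r \<otimes> y = p\<close>, so \<open>p\<close>
  and \<open>r\<close> commute, and \<open>A = inv p\<close>, \<open>B = inv r\<close> split the unit: \<open>A \<oplus> B = e\<close>.\<close>

lemma unit_decomposition:
  assumes y: "y \<in> Units"
  obtains A B where "A \<in> Units" "B \<in> Units" "A \<preceq> e" "B \<preceq> e" "A \<oplus> B = e"
    "inv A = e \<oplus> y" "y = inv A \<otimes> B" "inv A \<otimes> B = B \<otimes> inv A"
proof -
  have yS: "y \<in> S" and iy: "inv y \<in> S" "y \<otimes> inv y = e" "inv y \<otimes> y = e"
    using y unit_closed inv_closed r_inv l_inv by blast+
  define p where "p = e \<oplus> y"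
  define r where "r = e \<oplus> inv y"
  have pU: "p \<in> Units" and rU: "r \<in> Units" unfolding p_def r_def using one_add_unit yS iy by blast+
  have pS: "p \<in> S" and rS: "r \<in> S" using pU rU unit_closed by blast+
  have yr: "y \<otimes> r = p" and ry: "r \<otimes> y = p"
    unfolding p_def r_def using yS iy one_closed
    by (simp_all add: distrib_left distrib_right mul_one_left mul_one_right add_commute)
  have pr: "p \<otimes> r = r \<otimes> p"
    using distrib_right[OF one_closed yS rS] distrib_left[OF rS one_closed yS] yr ry rS
    unfolding p_def by (simp add: mul_one_left mul_one_right add_commute pS[unfolded p_def])
  define A where "A = inv p"
  define B where "B = inv r"
  have AU: "A \<in> Units" and BU: "B \<in> Units" unfolding A_def B_def using inv_unit pU rU by blast+
  have AS: "A \<in> S" and BS: "B \<in> S" using AU BU unit_closed by blast+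
  have iA: "inv A = p" unfolding A_def using inv_inv pU by blast
  have y_eq: "y = p \<otimes> B"
    unfolding B_def using yr[symmetric] mul_inv_cancel_right[OF rU yS] by simp
  have "A = B \<otimes> inv y" unfolding A_def B_def using inv_mul[OF y rU] yr by simp
  then have "A \<oplus> B = B \<otimes> inv y \<oplus> B \<otimes> e" using BS by (simp add: mul_one_right)
  also have "\<dots> = B \<otimes> r"
    unfolding r_def
    using distrib_left[OF BS iy(1) one_closed] add_commute[OF iy(1) one_closed] by simp
  also have "\<dots> = e" unfolding B_def using l_inv[OF rU] .
  finally have AB: "A \<oplus> B = e" .
  have "e \<otimes> A \<preceq> p \<otimes> A"
    using mul_right_mono[OF one_closed pS AS le_add1[OF one_closed yS, folded p_def]] .
  then have Ale: "A \<preceq> e"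
    using AS r_inv[OF pU] mul_one_left unfolding A_def by simp
  have "e \<otimes> B \<preceq> r \<otimes> B"
    using mul_right_mono[OF one_closed rS BS le_add1[OF one_closed iy(1), folded r_def]] .
  then have Ble: "B \<preceq> e"
    using BS r_inv[OF rU] mul_one_left unfolding B_def by simp
  have "p \<otimes> B = B \<otimes> p" unfolding B_def using commute_inv[OF rU pS pr] .
  then show ?thesis
    using that AU BU Ale Ble AB iA y_eq unfolding p_def by simp
qed

lemma le_one_of_npow_le_one:
  assumes y: "y \<in> Units" and "0 < k" and yk: "npow y k \<preceq> e"
  shows "y \<preceq> e"
proof -
  obtain A B where AB: "A \<in> Units" "B \<in> Units" "A \<preceq> e" "B \<preceq> e" "A \<oplus> B = e"
    "inv A = e \<oplus> y" "y = inv A \<otimes> B" "inv A \<otimes> B = B \<otimes> inv A"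
    using unit_decomposition[OF y] by blast
  have S: "A \<in> S" "B \<in> S" "inv A \<in> S" "y \<in> S" using AB y inv_closed unit_closed by blast+
  have Ak: "npow A k \<in> S" "npow A k \<preceq> e" using S npow_closed npow_le_one AB by blast+
  have "npow y k = npow (inv A) k \<otimes> npow B k"
    using npow_mul_distrib[OF S(3,2) AB(8)] AB(7) by simp
  then have "npow A k \<otimes> npow y k = npow A k \<otimes> npow (inv A) k \<otimes> npow B k"
    using S by (simp add: mul_assoc npow_closed)
  also have "\<dots> = npow B k"
    using AB(1) S by (simp add: npow_inv inv_inv r_inv npow_unit mul_one_left npow_closed)
  finally have "npow B k \<preceq> npow A k"
    using mul_left_mono[OF npow_closed[OF S(4)] one_closed Ak(1) yk] Ak(1)
    by (simp add: mul_one_right)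
  moreover have "npow B k \<oplus> npow A k = e"
  proof -
    have "B \<oplus> npow A k = e"
      using add_npow_eq_one[OF S(1) AB(3) S(2) AB(4) AB(5)] add_commute[OF S(2) Ak(1)] by simp
    then show ?thesis using add_npow_eq_one[OF S(2) AB(4) Ak] by blast
  qed
  ultimately have "npow A k = e" unfolding le_def by simp
  then have "e \<preceq> A" using npow_le_self[OF S(1) AB(3) \<open>0 < k\<close>] by simp
  then have "A = e" using le_antisym[OF S(1) one_closed AB(3)] by simp
  then show ?thesis using AB(6) inv_one S(4) one_closed by (simp add: le_def add_commute)
qed

lemma inv_antimono: assumes a: "a \<in> Units" and b: "b \<in> Units" and "a \<preceq> b" shows "inv b \<preceq> inv a"
proof -
  have S: "a \<in> S" "b \<in> S" "inv a \<in> S" "inv b \<in> S" using a b inv_closed unit_closed by blast+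
  have "inv b \<otimes> a \<preceq> e" using mul_left_mono[OF S(1,2,4) \<open>a \<preceq> b\<close>] l_inv[OF b] by simp
  then have "inv b \<otimes> a \<otimes> inv a \<preceq> e \<otimes> inv a"
    using mul_right_mono[OF mul_closed one_closed] S by blast
  then show ?thesis using S a by (simp add: mul_inv_cancel_right mul_one_left)
qed

lemma unit_comparable_one_of_npow:
  assumes x: "x \<in> Units" and "0 < k" and "npow x k \<preceq> e \<or> e \<preceq> npow x k"
  shows "x \<preceq> e \<or> e \<preceq> x"
  using assms(3)
proof
  assume "npow x k \<preceq> e"
  then show ?thesis using le_one_of_npow_le_one[OF x \<open>0 < k\<close>] by blast
next
  assume "e \<preceq> npow x k"
  then have "npow (inv x) k \<preceq> e"
    using inv_antimono[OF one_unit npow_unit[OF x]] npow_inv[OF x] inv_one by simp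
  then have "inv x \<preceq> e" using le_one_of_npow_le_one[OF inv_unit[OF x] \<open>0 < k\<close>] by blast
  then have "e \<preceq> x" using inv_antimono[OF inv_unit[OF x] one_unit] inv_inv[OF x] inv_one by simp
  then show ?thesis ..
qed

lemma le_total_of_units_comparable:
  assumes comparable: "\<And>u. u \<in> Units \<Longrightarrow> u \<preceq> e \<or> e \<preceq> u" and x: "x \<in> S" and y: "y \<in> S"
  shows "x \<preceq> y \<or> y \<preceq> x"
proof (cases "x = z \<or> y = z")
  case True
  then show ?thesis using zero_le x y by blast
next
  case False
  then have xU: "x \<in> Units" and yU: "y \<in> Units" using x y units_eq by auto
  have "x \<otimes> inv y \<preceq> e \<or> e \<preceq> x \<otimes> inv y" using comparable mul_unit[OF xU inv_unit[OF yU]] by blast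
  moreover have "x \<otimes> inv y \<otimes> y = x" using mul_inv_cancel_right' yU x by blast
  moreover have "x \<otimes> inv y \<in> S" using x inv_closed[OF yU] mul_closed by blast
  ultimately show ?thesis
    using mul_right_mono[OF _ one_closed y] mul_right_mono[OF one_closed _ y] mul_one_left[OF y]
    by metis
qed

lemma zpow_mono: assumes g: "g \<in> Units" "e \<preceq> g" and "a \<le> b" shows "zpow g a \<preceq> zpow g b"
proof -
  have "zpow g b = zpow g a \<otimes> npow g (nat (b - a))"
    using zpow_add[OF g(1), of a "b - a"] zpow_of_nat[of g "nat (b - a)"] \<open>a \<le> b\<close> by simp
  moreover have "zpow g a \<otimes> e \<preceq> zpow g a \<otimes> npow g (nat (b - a))"
    using mul_left_mono[OF one_closed npow_closed zpow_closed] one_le_npow g unit_closed by blast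
  ultimately show ?thesis using zpow_closed[OF g(1)] by (simp add: mul_one_right)
qed

lemma zpow_neq_of_less:
  assumes g: "g \<in> Units" "e \<preceq> g" "g \<noteq> e" and "a < b" shows "zpow g a \<noteq> zpow g b"
proof
  assume eq: "zpow g a = zpow g b"
  have gS: "g \<in> S" using g unit_closed by blast
  obtain m where m: "b - a = int (Suc m)" using \<open>a < b\<close> by (intro that[of "nat (b - a) - 1"]) auto
  have "zpow g b = zpow g a \<otimes> zpow g (b - a)" using zpow_add[OF g(1), of a "b - a"] by simp
  then have "zpow g a \<otimes> e = zpow g a \<otimes> npow g (Suc m)"
    using eq zpow_closed[OF g(1)] by (simp only: m zpow_of_nat mul_one_right)
  then have "e = npow g (Suc m)"
    by (rule cancel_left[OF zpow_unit[OF g(1)] one_closed npow_closed[OF gS]])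
  moreover have "g \<otimes> e \<preceq> g \<otimes> npow g m"
    using mul_left_mono[OF one_closed npow_closed[OF gS] gS one_le_npow[OF gS g(2)]] .
  ultimately have "g \<otimes> e \<preceq> e" by (simp add: npow_Suc)
  then show False using le_antisym[OF gS one_closed _ g(2)] g(3) gS by (simp add: mul_one_right)
qed

lemma zpow_le_iff: assumes g: "g \<in> Units" "e \<preceq> g" "g \<noteq> e" shows "zpow g a \<preceq> zpow g b \<longleftrightarrow> a \<le> b"
proof
  assume le: "zpow g a \<preceq> zpow g b"
  show "a \<le> b"
  proof (rule ccontr)
    assume "\<not> a \<le> b"
    then have "zpow g b \<preceq> zpow g a" "zpow g b \<noteq> zpow g a"
      using zpow_mono[OF g(1,2)] zpow_neq_of_less[OF g] by simp_all
    then show False using le_antisym[OF zpow_closed[OF g(1)] zpow_closed[OF g(1)] le] by auto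
  qed
qed (rule zpow_mono[OF g(1,2)])

lemma zpow_eq_iff: assumes g: "g \<in> Units" "e \<preceq> g" "g \<noteq> e" shows "zpow g a = zpow g b \<longleftrightarrow> a = b"
  using zpow_neq_of_less[OF g, of a b] zpow_neq_of_less[OF g, of b a]
  by (metis not_less_iff_gr_or_eq)

lemma finite_has_least:
  assumes "finite A" "A \<noteq> {}" "A \<subseteq> S" and total: "\<And>x y. x \<in> A \<Longrightarrow> y \<in> A \<Longrightarrow> x \<preceq> y \<or> y \<preceq> x"
  shows "\<exists>m\<in>A. \<forall>x\<in>A. m \<preceq> x"
  using assms
proof (induction A rule: finite_ne_induct)
  case (singleton x)
  then show ?case using le_refl by simp
next
  case (insert x F)
  have "F \<subseteq> S" "\<And>x y. x \<in> F \<Longrightarrow> y \<in> F \<Longrightarrow> x \<preceq> y \<or> y \<preceq> x"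
    using insert.prems by simp_all
  then obtain m where m: "m \<in> F" "\<forall>y\<in>F. m \<preceq> y" using insert.IH by blast
  have xS: "x \<in> S" and mS: "m \<in> S" using insert.prems(1) m(1) by auto
  consider "x \<preceq> m" | "m \<preceq> x" using insert.prems(2) m(1) by blast
  then show ?case
  proof cases
    case 1
    have "x \<preceq> y" if "y \<in> F" for y
      using le_trans[OF xS mS _ 1] m(2) that insert.prems(1) by blast
    then show ?thesis using le_refl[OF xS] by blast
  next
    case 2
    then show ?thesis using m by blast
  qed
qed

end

locale zmax_division_semialgebra =
  fixes S :: "'a set"
    and add :: "'a \<Rightarrow> 'a \<Rightarrow> 'a" (infixl \<open>\<oplus>\<close> 65)
    and mul :: "'a \<Rightarrow> 'a \<Rightarrow> 'a" (infixl \<open>\<otimes>\<close> 70)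
    and z e :: 'a
    and f :: "zmax \<Rightarrow> 'a"
  assumes semialgebra: "division_semialgebra_zmax S (\<oplus>) (\<otimes>) z e f"
    and finite_unit_index: "finite (unit_cosets S (\<otimes>) e f)"
begin

lemma f_closed: "f a \<in> S"
  and f_zero: "f None = z"
  and f_one: "f (Some 0) = e"
  and f_add: "f (zmax_add a b) = f a \<oplus> f b"
  and f_mul: "f (zmax_mul a b) = f a \<otimes> f b"
  using semialgebra
  unfolding division_semialgebra_zmax_def zmax_hom_on_def zmax_zero_def zmax_one_def by blast+

lemma f_inj: "inj f"
  using semialgebra unfolding division_semialgebra_zmax_def by blast

sublocale idempotent_division_semiring S "(\<oplus>)" "(\<otimes>)" z e
proof unfold_locales
  show "semiring_on S (\<oplus>) (\<otimes>) z e"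
    using semialgebra unfolding division_semialgebra_zmax_def division_semiring_on_def by blast
  show "x \<in> units_on S (\<otimes>) e" if "x \<in> S" "x \<noteq> z" for x
    using semialgebra that unfolding division_semialgebra_zmax_def division_semiring_on_def by blast
  show "z \<noteq> e"
    using f_inj f_zero f_one by (metis inj_eq option.distinct(1))
  show "z \<otimes> z = z"
    using f_mul[of None None] f_zero by (simp add: zmax_mul_def)
  show "e \<oplus> e = e"
    using f_add[of "Some 0" "Some 0"] f_one by (simp add: zmax_add_def)
qed

definition emb :: "int \<Rightarrow> 'a" where "emb c = f (Some c)"

lemma emb_add: "emb (a + b) = emb a \<otimes> emb b"
  unfolding emb_def using f_mul[of "Some a" "Some b"] by (simp add: zmax_mul_def)

lemma emb_0: "emb 0 = e"
  unfolding emb_def by (rule f_one)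

lemma emb_closed: "emb c \<in> S"
  unfolding emb_def by (rule f_closed)

lemma emb_unit: "emb c \<in> Units"
proof -
  have "emb c \<noteq> z" unfolding emb_def using f_inj f_zero by (metis inj_eq option.distinct(1))
  then show ?thesis using emb_closed units_eq by blast
qed

lemma emb_le_iff: "emb a \<preceq> emb b \<longleftrightarrow> a \<le> b"
proof -
  have "emb a \<oplus> emb b = emb (max a b)"
    unfolding emb_def using f_add[of "Some a" "Some b"] by (simp add: zmax_add_def)
  moreover have "emb (max a b) = emb b \<longleftrightarrow> max a b = b"
    unfolding emb_def using f_inj by (simp add: inj_eq)
  ultimately have "emb a \<oplus> emb b = emb b \<longleftrightarrow> max a b = b" by simp
  then show ?thesis unfolding le_def by linarith
qed

lemma npow_emb: "npow (emb c) n = emb (c * int n)"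
  by (induction n) (simp_all add: npow_Suc emb_0 emb_add[symmetric] algebra_simps)

lemma emb_eq_zpow: "emb c = zpow (emb 1) c"
  by (rule zpow_unique[of "emb 1" emb, OF emb_unit emb_closed emb_0])
    (simp add: emb_add[symmetric] add.commute)

definition coset :: "'a \<Rightarrow> 'a set" where "coset x = {x \<otimes> emb k | k. True}"

lemma finite_cosets: "finite (coset ` Units)"
  using finite_unit_index unfolding unit_cosets_def coset_def emb_def .

lemma coset_eqD: assumes "x \<in> S" "coset x = coset y" obtains c where "x = y \<otimes> emb c"
proof -
  have "x \<in> coset x" unfolding coset_def
    using assms(1) emb_0 by (metis (mono_tags) mul_one_right mem_Collect_eq)
  then show ?thesis using assms(2) that unfolding coset_def by blast
qed

lemma npow_in_emb: assumes x: "x \<in> Units" obtains k j where "0 < k" "npow x k = emb j"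
proof -
  have xS: "x \<in> S" using x unit_closed by blast
  have "range (\<lambda>i. coset (npow x i)) \<subseteq> coset ` Units" using npow_unit[OF x] by blast
  then have "finite (range (\<lambda>i. coset (npow x i)))" using finite_cosets by (rule finite_subset)
  then have "\<not> inj (\<lambda>i. coset (npow x i))" using finite_imageD infinite_UNIV_nat by blast
  then obtain i i' where "i \<noteq> i'" "coset (npow x i) = coset (npow x i')" unfolding inj_def by blast
  then obtain a b where "a < b" "coset (npow x b) = coset (npow x a)"
    by (metis linorder_neqE_nat)
  obtain c where c: "npow x b = npow x a \<otimes> emb c"
    using coset_eqD[OF npow_closed[OF xS] \<open>coset (npow x b) = coset (npow x a)\<close>] .
  have "npow x a \<otimes> npow x (b - a) = npow x a \<otimes> emb c"
    using npow_add[OF xS, of a "b - a"] \<open>a < b\<close> c by simp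
  then have "npow x (b - a) = emb c"
    by (rule cancel_left[OF npow_unit[OF x] npow_closed[OF xS] emb_closed])
  then show ?thesis using that[of "b - a" c] \<open>a < b\<close> by simp
qed

lemma unit_comparable_one: assumes x: "x \<in> Units" shows "x \<preceq> e \<or> e \<preceq> x"
proof -
  obtain k j where "0 < k" "npow x k = emb j" using npow_in_emb[OF x] .
  moreover have "emb j \<preceq> e \<or> e \<preceq> emb j" unfolding emb_0[symmetric] emb_le_iff by linarith
  ultimately show ?thesis using unit_comparable_one_of_npow[OF x] by metis
qed

lemma le_total: "x \<in> S \<Longrightarrow> y \<in> S \<Longrightarrow> x \<preceq> y \<or> y \<preceq> x"
  using le_total_of_units_comparable unit_comparable_one by blast

lemma archimedean:
  assumes h: "h \<in> Units" "e \<preceq> h" "h \<noteq> e" and x: "x \<in> Units"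
  obtains b where "x \<preceq> npow h b"
proof -
  have hS: "h \<in> S" and xS: "x \<in> S" using h x unit_closed by blast+
  obtain k j where k: "0 < k" "npow h k = emb j" using npow_in_emb[OF h(1)] .
  have "0 < j"
  proof (rule ccontr)
    assume "\<not> 0 < j"
    then have "npow h k \<preceq> e" using k emb_le_iff[of j 0] emb_0 by simp
    then have "h \<preceq> e" using le_one_of_npow_le_one[OF h(1) k(1)] by blast
    then show False using le_antisym[OF hS one_closed _ h(2)] h(3) by blast
  qed
  obtain k' j' where k': "0 < k'" "npow x k' = emb j'" using npow_in_emb[OF x] .
  define m where "m = nat \<bar>j'\<bar> + 1"
  have "x \<preceq> npow h (k * m)"
  proof (rule ccontr)
    assume "\<not> x \<preceq> npow h (k * m)"
    then have "npow h (k * m) \<preceq> x" using le_total xS npow_closed[OF hS] by blast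
    then have "npow (npow h (k * m)) k' \<preceq> npow x k'" using npow_mono npow_closed hS xS by blast
    moreover have "npow (npow h (k * m)) k' = emb (j * int (m * k'))"
    proof -
      have "npow (npow h (k * m)) k' = npow (npow h k) (m * k')"
        using hS by (simp add: npow_mult[symmetric] mult.assoc)
      then show ?thesis using k(2) npow_emb by simp
    qed
    ultimately have "j * int (m * k') \<le> j'" using k' emb_le_iff by simp
    moreover have "int m \<le> int (m * k')" using k'(1) by (simp del: of_nat_mult)
    moreover have "int (m * k') \<le> j * int (m * k')"
      using mult_right_mono[of 1 j "int (m * k')"] \<open>0 < j\<close> by simp
    ultimately show False unfolding m_def by linarith
  qed
  then show ?thesis by (rule that)
qed

lemma archimedean_inv:
  assumes h: "h \<in> Units" "e \<preceq> h" "h \<noteq> e" and x: "x \<in> Units"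
  obtains b where "npow (inv h) b \<preceq> x"
proof -
  obtain b where "inv x \<preceq> npow h b" using archimedean[OF h inv_unit[OF x]] .
  then have "inv (npow h b) \<preceq> x"
    using inv_antimono[OF inv_unit[OF x] npow_unit[OF h(1)]] inv_inv[OF x] by simp
  then show ?thesis using that npow_inv[OF h(1)] by simp
qed

definition unit_interval :: "'a set" where
  "unit_interval = {x \<in> Units. x \<noteq> e \<and> e \<preceq> x \<and> x \<preceq> emb 1}"

lemma emb_1_in_unit_interval: "emb 1 \<in> unit_interval"
  unfolding unit_interval_def
  using emb_unit emb_closed le_refl emb_le_iff[of 0 1] emb_0 f_inj by (auto simp: emb_def inj_eq)

text \<open>Since \<open>emb 1\<close> is the least element of \<open>emb ` UNIV\<close> above \<open>e\<close>, two elements of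
  \<open>unit_interval\<close> cannot differ by a factor \<open>emb c\<close> with \<open>c \<noteq> 0\<close>.\<close>

lemma unit_interval_quotient:
  assumes x: "x \<in> unit_interval" and y: "y \<in> unit_interval" and c: "x = y \<otimes> emb c"
  shows "c = 0"
proof (rule ccontr)
  assume "c \<noteq> 0"
  have xS: "x \<in> S" and yS: "y \<in> S" and t: "emb 1 \<in> S" "emb 1 \<in> Units"
    using x y emb_closed emb_unit unfolding unit_interval_def by (auto simp: unit_closed)
  have xp: "x \<noteq> e" "e \<preceq> x" "x \<preceq> emb 1" and yp: "y \<noteq> e" "e \<preceq> y" "y \<preceq> emb 1"
    using x y unfolding unit_interval_def by auto
  consider "1 \<le> c" | "c \<le> -1" using \<open>c \<noteq> 0\<close> by linarith
  then show False
  proof cases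
    case 1
    then have a: "y \<otimes> emb 1 \<preceq> x" using mul_left_mono[OF t(1) emb_closed yS] c emb_le_iff by simp
    have b: "emb 1 \<preceq> y \<otimes> emb 1"
      using mul_right_mono[OF one_closed yS t(1) yp(2)] t(1) by (simp add: mul_one_left)
    have "emb 1 \<preceq> x" using le_trans[OF t(1) mul_closed[OF yS t(1)] xS b a] .
    then have "x = emb 1" using le_antisym[OF xS t(1) xp(3)] by simp
    then have "y \<otimes> emb 1 = e \<otimes> emb 1"
      using le_antisym[OF mul_closed[OF yS t(1)] t(1)] a b t(1) by (simp add: mul_one_left)
    then have "y = e" using cancel_right[OF t(2) yS one_closed] by simp
    then show False using yp by simp
  next
    case 2
    then have "x \<preceq> y \<otimes> emb (- 1)"
      using mul_left_mono[OF emb_closed emb_closed yS] c emb_le_iff by simp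
    moreover have "y \<otimes> emb (- 1) \<preceq> emb 1 \<otimes> emb (- 1)"
      using mul_right_mono[OF yS t(1) emb_closed yp(3)] .
    moreover have "emb 1 \<otimes> emb (- 1) = e" using emb_add[of 1 "- 1"] emb_0 by simp
    ultimately have "x \<preceq> e" using le_trans[OF xS mul_closed[OF yS emb_closed] one_closed] by simp
    then have "x = e" using le_antisym[OF xS one_closed _ xp(2)] by simp
    then show False using xp by simp
  qed
qed

lemma finite_unit_interval: "finite unit_interval"
proof (rule inj_on_finite[of coset])
  show "inj_on coset unit_interval"
  proof (rule inj_onI)
    fix x y assume x: "x \<in> unit_interval" and y: "y \<in> unit_interval" and "coset x = coset y"
    moreover have "x \<in> S" "y \<in> S" using x y unit_closed unfolding unit_interval_def by blast+
    ultimately obtain c where c: "x = y \<otimes> emb c" using coset_eqD by blast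
    then have "c = 0" using unit_interval_quotient[OF x y] by blast
    then show "x = y" using c emb_0 \<open>y \<in> S\<close> by (simp add: mul_one_right)
  qed
  show "coset ` unit_interval \<subseteq> coset ` Units" unfolding unit_interval_def by blast
qed (rule finite_cosets)

definition gen :: 'a where
  "gen = (SOME m. m \<in> unit_interval \<and> (\<forall>x\<in>unit_interval. m \<preceq> x))"

lemma gen_least: "gen \<in> unit_interval" "\<And>x. x \<in> unit_interval \<Longrightarrow> gen \<preceq> x"
proof -
  have sub: "unit_interval \<subseteq> S" unfolding unit_interval_def using unit_closed by blast
  have "\<exists>m\<in>unit_interval. \<forall>x\<in>unit_interval. m \<preceq> x"
    using finite_has_least[OF finite_unit_interval _ sub] emb_1_in_unit_interval le_total sub
    by blast
  then have "\<exists>m. m \<in> unit_interval \<and> (\<forall>x\<in>unit_interval. m \<preceq> x)" by blast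
  then have "gen \<in> unit_interval \<and> (\<forall>x\<in>unit_interval. gen \<preceq> x)"
    unfolding gen_def by (rule someI_ex)
  then show "gen \<in> unit_interval" "\<And>x. x \<in> unit_interval \<Longrightarrow> gen \<preceq> x" by blast+
qed

lemma gen: "gen \<in> Units" "e \<preceq> gen" "gen \<noteq> e" "gen \<preceq> emb 1"
  using gen_least(1) unfolding unit_interval_def by blast+

lemma zpow_floor:
  assumes g: "g \<in> Units" "e \<preceq> g" "g \<noteq> e" and x: "x \<in> Units"
  obtains a where "zpow g a \<preceq> x" "\<not> zpow g (a + 1) \<preceq> x"
proof -
  have xS: "x \<in> S" using x unit_closed by blast
  obtain b where b: "x \<preceq> zpow g (int b)" using archimedean[OF g x] zpow_of_nat by metis
  obtain b' where b': "zpow g (- int b') \<preceq> x" using archimedean_inv[OF g x] zpow_neg_of_nat by metis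
  have bounded: "a \<le> int b" if "zpow g a \<preceq> x" for a
    using le_trans[OF zpow_closed[OF g(1)] xS zpow_closed[OF g(1)] that b] zpow_le_iff[OF g]
    by blast
  define A where "A = {a \<in> {- int b' .. int b}. zpow g a \<preceq> x}"
  have "finite A" unfolding A_def by (rule finite_subset[of _ "{- int b' .. int b}"]) auto
  moreover have "- int b' \<in> A" unfolding A_def using b' bounded[OF b'] by auto
  ultimately have max: "Max A \<in> A" "\<And>a. a \<in> A \<Longrightarrow> a \<le> Max A" using Max_in Max_ge by blast+
  have "\<not> zpow g (Max A + 1) \<preceq> x"
  proof
    assume "zpow g (Max A + 1) \<preceq> x"
    then have "Max A + 1 \<in> A" using bounded max(1) unfolding A_def by simp
    then show False using max(2) by fastforce
  qed
  then show ?thesis using that max(1) unfolding A_def by blast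
qed

text \<open>With \<open>zpow gen a \<preceq> x \<prec> zpow gen (a + 1)\<close>, the quotient \<open>zpow gen (- a) \<otimes> x\<close> lies in
  \<open>[e, gen)\<close>, so it is \<open>e\<close> by minimality of \<open>gen\<close>.\<close>

lemma unit_eq_zpow_gen: assumes x: "x \<in> Units" obtains a where "x = zpow gen a"
proof -
  have xS: "x \<in> S" and gS: "gen \<in> S" using x gen unit_closed by blast+
  obtain a where lo: "zpow gen a \<preceq> x" and hi: "\<not> zpow gen (a + 1) \<preceq> x"
    using zpow_floor[OF gen(1-3) x] .
  have x_le: "x \<preceq> zpow gen (a + 1)" using le_total[OF xS zpow_closed[OF gen(1)]] hi by blast
  define y where "y = zpow gen (- a) \<otimes> x"
  have yS: "y \<in> S" unfolding y_def using mul_closed zpow_closed[OF gen(1)] xS by blast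
  have x_eq: "x = zpow gen a \<otimes> y"
    unfolding y_def using zpow_add[OF gen(1), of a "- a"] zpow_0 zpow_closed[OF gen(1)] xS
    by (simp add: mul_assoc[symmetric] mul_one_left)
  have "zpow gen (- a) \<otimes> zpow gen a \<preceq> y"
    unfolding y_def using mul_left_mono[OF zpow_closed[OF gen(1)] xS zpow_closed[OF gen(1)] lo] .
  then have ey: "e \<preceq> y" using zpow_add[OF gen(1), of "- a" a] zpow_0 by simp
  have "y \<preceq> zpow gen (- a) \<otimes> zpow gen (a + 1)"
    unfolding y_def using mul_left_mono[OF xS zpow_closed[OF gen(1)] zpow_closed[OF gen(1)] x_le] .
  then have yg: "y \<preceq> gen" using zpow_add[OF gen(1), of "- a" "a + 1"] zpow_1[OF gen(1)] by simp
  have "y \<noteq> gen"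
  proof
    assume "y = gen"
    then have "x = zpow gen (a + 1)"
      using x_eq zpow_add[OF gen(1), of a 1] zpow_1[OF gen(1)] by simp
    then show False using hi le_refl[OF xS] by simp
  qed
  have "y \<noteq> z" using ey add_zero_right[OF one_closed] zero_neq_one unfolding le_def by auto
  then have "y \<in> Units" using yS units_eq by blast
  have "y = e"
  proof (rule ccontr)
    assume "y \<noteq> e"
    moreover have "y \<preceq> emb 1" using le_trans[OF yS gS emb_closed yg gen(4)] .
    ultimately have "y \<in> unit_interval" unfolding unit_interval_def using \<open>y \<in> Units\<close> ey by blast
    then have "gen \<preceq> y" by (rule gen_least(2))
    then show False using le_antisym[OF yS gS yg] \<open>y \<noteq> gen\<close> by simp
  qed
  then show ?thesis using that x_eq zpow_closed[OF gen(1)] by (simp add: mul_one_right)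
qed

lemma emb_eq_zpow_gen: obtains n :: nat where "0 < n" "\<And>c. emb c = zpow gen (int n * c)"
proof -
  obtain a where a: "emb 1 = zpow gen a" using unit_eq_zpow_gen[OF emb_unit] .
  have "zpow gen 1 \<preceq> zpow gen a" using gen(4) a zpow_1[OF gen(1)] by simp
  then have "1 \<le> a" using zpow_le_iff[OF gen(1-3)] by blast
  have succ: "zpow gen (a * (c + 1)) = emb 1 \<otimes> zpow gen (a * c)" for c
    using zpow_add[OF gen(1), of a "a * c"] a by (simp add: algebra_simps)
  have "zpow gen (a * c) = zpow (emb 1) c" for c
    by (rule zpow_unique[of "emb 1" "\<lambda>c. zpow gen (a * c)", OF emb_unit zpow_closed[OF gen(1)] _ succ])
      (simp add: zpow_0)
  then have "emb c = zpow gen (int (nat a) * c)" for c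
    using emb_eq_zpow[of c] \<open>1 \<le> a\<close> by simp
  moreover have "0 < nat a" using \<open>1 \<le> a\<close> by simp
  ultimately show ?thesis using that by blast
qed

definition elem :: "zmax \<Rightarrow> 'a" where
  "elem a = (case a of None \<Rightarrow> z | Some k \<Rightarrow> zpow gen k)"

lemma elem_add: "elem (zmax_add a b) = elem a \<oplus> elem b"
proof -
  have "zpow gen k \<oplus> zpow gen l = zpow gen (max k l)" for k l
  proof (cases "k \<le> l")
    case True
    then show ?thesis using zpow_le_iff[OF gen(1-3)] unfolding le_def by (simp add: max_def)
  next
    case False
    then have "zpow gen l \<oplus> zpow gen k = zpow gen k"
      using zpow_le_iff[OF gen(1-3)] unfolding le_def by simp
    then show ?thesis using False add_commute zpow_closed[OF gen(1)] by (simp add: max_def)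
  qed
  then show ?thesis
    by (cases a; cases b)
      (simp_all add: elem_def zmax_add_def add_zero_left add_zero_right zero_closed
        zpow_closed[OF gen(1)])
qed

lemma elem_mul: "elem (zmax_mul a b) = elem a \<otimes> elem b"
  by (cases a; cases b)
    (simp_all add: elem_def zmax_mul_def zero_mul_zero mul_zero_left mul_zero_right
      zpow_closed[OF gen(1)] zpow_add[OF gen(1)])

lemma zpow_gen_nonzero: "zpow gen k \<noteq> z"
  using zpow_unit[OF gen(1)] zero_not_unit by auto

lemma bij_elem: "bij_betw elem UNIV S"
proof (rule bij_betwI')
  show "elem a = elem b \<longleftrightarrow> a = b" for a b
    using zpow_gen_nonzero zpow_gen_nonzero[symmetric] zpow_eq_iff[OF gen(1-3)]
    by (cases a; cases b) (simp_all add: elem_def)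
  show "elem a \<in> S" for a
    by (cases a) (simp_all add: elem_def zero_closed zpow_closed[OF gen(1)])
  show "\<exists>a\<in>UNIV. x = elem a" if "x \<in> S" for x
  proof (cases "x = z")
    case True
    then have "x = elem None" by (simp add: elem_def)
    then show ?thesis by blast
  next
    case False
    then have "x \<in> Units" using that units_eq by blast
    then obtain k where "x = zpow gen k" by (rule unit_eq_zpow_gen)
    then have "x = elem (Some k)" by (simp add: elem_def)
    then show ?thesis by blast
  qed
qed

lemma iso_to_Fn_elem:
  assumes n: "\<And>c. emb c = zpow gen (int n * c)"
  shows "iso_to_Fn S (\<oplus>) (\<otimes>) z e f n (the_inv_into UNIV elem)"
  unfolding iso_to_Fn_def
proof (intro conjI ballI allI)
  let ?\<psi> = "the_inv_into UNIV elem"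
  have \<psi>_elem: "?\<psi> (elem a) = a" for a
    using the_inv_into_f_f[OF bij_betw_imp_inj_on[OF bij_elem]] by simp
  show "bij_betw ?\<psi> S UNIV" by (rule bij_betw_the_inv_into[OF bij_elem])
  show "?\<psi> z = zmax_zero"
    using \<psi>_elem[of zmax_zero] by (simp add: elem_def zmax_zero_def)
  show "?\<psi> e = zmax_one"
    using \<psi>_elem[of zmax_one] by (simp add: elem_def zmax_one_def zpow_0)
  show "?\<psi> (f a) = Fn_map n a" for a
  proof -
    have "f a = elem (Fn_map n a)"
      using n[unfolded emb_def] f_zero by (cases a) (simp_all add: Fn_map_def elem_def)
    then show ?thesis by (simp add: \<psi>_elem)
  qed
  fix x y assume "x \<in> S" "y \<in> S"
  then obtain a b where ab: "x = elem a" "y = elem b"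
    using bij_elem unfolding bij_betw_def by blast
  show "?\<psi> (x \<oplus> y) = zmax_add (?\<psi> x) (?\<psi> y)" unfolding ab elem_add[symmetric] \<psi>_elem ..
  show "?\<psi> (x \<otimes> y) = zmax_mul (?\<psi> x) (?\<psi> y)" unfolding ab elem_mul[symmetric] \<psi>_elem ..
qed

end

theorem mainTheorem18:
  fixes S :: "'a set" and add mul :: "'a \<Rightarrow> 'a \<Rightarrow> 'a" and z e :: 'a
    and f :: "zmax \<Rightarrow> 'a"
  assumes "division_semialgebra_zmax S add mul z e f"
    and "finite (unit_cosets S mul e f)"
  shows "\<exists>n::nat. n > 0 \<and> (\<exists>\<psi>. iso_to_Fn S add mul z e f n \<psi>)"
proof -
  interpret zmax_division_semialgebra S add mul z e f
    using assms by unfold_locales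
  obtain n where "0 < n" "\<And>c. emb c = zpow gen (int n * c)"
    using emb_eq_zpow_gen by blast
  then show ?thesis using iso_to_Fn_elem by blast
qed

end
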